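(* Let $\Gamma$ be a countable amenable group and $\alpha\colon\Gamma\curvearrowright X$ an action on a compact, Hausdorff, $0$-dimensional space. Then $b\in T(\alpha)$ is an order unit if and only if $\mu(b)>0$ for every $\mu\in\mathcal M(\alpha)$.
   Context: Clopen type semigroup: let $Y = X\times\mathbb N$, and let $\tilde\Gamma=\Gamma\times\mathfrak S$ ($\mathfrak S$ the permutation group of $\mathbb N$) act on $Y$ by $(\gamma,\sigma)(x,n)=(\alpha(\gamma)x,\sigma(n))$. A clopen $A\subseteq Y$ is bounded if $A\cap(X\times\{n\})=\emptyset$ for all large $n$. Bounded clopen $A,B$ are equidecomposable if there are clopen $A_1,\dots,A_n$ and $\tilde\gamma_i\in\tilde\Gamma$ with $A=\bigsqcup_i A_i$, $B=\bigsqcup_i\tilde\gamma_iA_i$. $T(\alpha)$ is the set of classes $[A]$, with $[A]+[B]=[A'\sqcup B']$ for disjoint representatives; $0=[\emptyset]$. $a\le b$ iff $b=a+c$ for some $c$. $b$ is an order unit if for each $a$ there is $k$ with $a\le kb$. A state is a monoid homomorphism $T(\alpha)\to[0,+\infty]$; $\mathcal M(\alpha)$ is the set of states $\mu$ with $\mu([X\times\{0\}])=1$ (these correspond to $\alpha$-invariant Radon probability measures on $X$). *)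

theory Defs
  imports "HOL-Analysis.Analysis"
begin

definition amenable_group :: "'g::group_add itself \<Rightarrow> bool" where
  "amenable_group _ \<longleftrightarrow>
     (\<forall>F::'g set. finite F \<longrightarrow> (\<forall>\<epsilon>::real. \<epsilon> > 0 \<longrightarrow>
        (\<exists>K::'g set. finite K \<and> K \<noteq> {} \<and>
           (\<forall>g\<in>F. real (card ((((+) g) ` K - K) \<union> (K - ((+) g) ` K))) < \<epsilon> * real (card K)))))"

definition group_action :: "('g::group_add \<Rightarrow> 'x::topological_space \<Rightarrow> 'x) \<Rightarrow> bool" where
  "group_action \<alpha> \<longleftrightarrow> \<alpha> 0 = id \<and> (\<forall>g h. \<alpha> (g + h) = \<alpha> g \<circ> \<alpha> h)
     \<and> (\<forall>g. continuous_on UNIV (\<alpha> g))"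

definition zero_dimensional :: "'x::topological_space itself \<Rightarrow> bool" where
  "zero_dimensional _ \<longleftrightarrow>
     (\<forall>(U::'x set) x. open U \<and> x \<in> U \<longrightarrow> (\<exists>C. open C \<and> closed C \<and> x \<in> C \<and> C \<subseteq> U))"

definition bclopen :: "('x::topological_space \<times> nat) set \<Rightarrow> bool" where
  "bclopen A \<longleftrightarrow> open A \<and> closed A \<and> (\<exists>N. \<forall>n\<ge>N. \<forall>x. (x, n) \<notin> A)"

definition tact :: "('g \<Rightarrow> 'x \<Rightarrow> 'x) \<Rightarrow> 'g \<Rightarrow> (nat \<Rightarrow> nat) \<Rightarrow> 'x \<times> nat \<Rightarrow> 'x \<times> nat" where
  "tact \<alpha> g \<sigma> p = (\<alpha> g (fst p), \<sigma> (snd p))"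

definition equidec :: "('g \<Rightarrow> 'x::topological_space \<Rightarrow> 'x) \<Rightarrow> ('x \<times> nat) set \<Rightarrow> ('x \<times> nat) set \<Rightarrow> bool" where
  "equidec \<alpha> A B \<longleftrightarrow>
     (\<exists>(n::nat) (P::nat \<Rightarrow> ('x \<times> nat) set) (gs::nat \<Rightarrow> 'g) (\<sigma>s::nat \<Rightarrow> nat \<Rightarrow> nat).
        (\<forall>i<n. open (P i) \<and> closed (P i) \<and> bij (\<sigma>s i))
      \<and> disjoint_family_on P {..<n} \<and> A = (\<Union>i<n. P i)
      \<and> disjoint_family_on (\<lambda>i. tact \<alpha> (gs i) (\<sigma>s i) ` P i) {..<n}
      \<and> B = (\<Union>i<n. tact \<alpha> (gs i) (\<sigma>s i) ` P i))"

definition tcls :: "('g \<Rightarrow> 'x::topological_space \<Rightarrow> 'x) \<Rightarrow> ('x \<times> nat) set \<Rightarrow> ('x \<times> nat) set set" where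
  "tcls \<alpha> A = {B. bclopen B \<and> equidec \<alpha> A B}"

definition Tsg :: "('g \<Rightarrow> 'x::topological_space \<Rightarrow> 'x) \<Rightarrow> ('x \<times> nat) set set set" where
  "Tsg \<alpha> = {tcls \<alpha> A | A. bclopen A}"

definition tzero :: "('g \<Rightarrow> 'x::topological_space \<Rightarrow> 'x) \<Rightarrow> ('x \<times> nat) set set" where
  "tzero \<alpha> = tcls \<alpha> {}"

definition tadd :: "('g \<Rightarrow> 'x::topological_space \<Rightarrow> 'x) \<Rightarrow> ('x \<times> nat) set set \<Rightarrow> ('x \<times> nat) set set \<Rightarrow> ('x \<times> nat) set set" where
  "tadd \<alpha> a b = tcls \<alpha> (SOME C. \<exists>A B. A \<in> a \<and> B \<in> b \<and> A \<inter> B = {} \<and> C = A \<union> B)"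

definition tmul :: "('g \<Rightarrow> 'x::topological_space \<Rightarrow> 'x) \<Rightarrow> nat \<Rightarrow> ('x \<times> nat) set set \<Rightarrow> ('x \<times> nat) set set" where
  "tmul \<alpha> k b = (tadd \<alpha> b ^^ k) (tzero \<alpha>)"

definition tle :: "('g \<Rightarrow> 'x::topological_space \<Rightarrow> 'x) \<Rightarrow> ('x \<times> nat) set set \<Rightarrow> ('x \<times> nat) set set \<Rightarrow> bool" where
  "tle \<alpha> a b \<longleftrightarrow> (\<exists>c\<in>Tsg \<alpha>. b = tadd \<alpha> a c)"

definition order_unit :: "('g \<Rightarrow> 'x::topological_space \<Rightarrow> 'x) \<Rightarrow> ('x \<times> nat) set set \<Rightarrow> bool" where
  "order_unit \<alpha> b \<longleftrightarrow> b \<in> Tsg \<alpha> \<and> (\<forall>a\<in>Tsg \<alpha>. \<exists>k. tle \<alpha> a (tmul \<alpha> k b))"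

text \<open>States: monoid homomorphisms T(alpha) \<rightarrow> [0,+\<infinity>] (only values on T(alpha) matter).\<close>
definition tstate :: "('g \<Rightarrow> 'x::topological_space \<Rightarrow> 'x) \<Rightarrow> (('x \<times> nat) set set \<Rightarrow> ennreal) \<Rightarrow> bool" where
  "tstate \<alpha> \<mu> \<longleftrightarrow> \<mu> (tzero \<alpha>) = 0 \<and>
     (\<forall>a\<in>Tsg \<alpha>. \<forall>b\<in>Tsg \<alpha>. \<mu> (tadd \<alpha> a b) = \<mu> a + \<mu> b)"

definition Mstates :: "('g \<Rightarrow> 'x::topological_space \<Rightarrow> 'x) \<Rightarrow> (('x \<times> nat) set set \<Rightarrow> ennreal) set" where
  "Mstates \<alpha> = {\<mu>. tstate \<alpha> \<mu> \<and> \<mu> (tcls \<alpha> (UNIV \<times> {0})) = 1}"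

end

theory Submission
  imports Defs
begin

(* If the orbit of every point of X meets the shadow of B on X, compactness splits X into
   clopen pieces P_0, ..., P_(r-1), each moved into B by a single group element. Sending level m
   of a bounded clopen set, over the piece P_j, into the (m r + j)-th of a stack of disjoint
   copies of B shows that k [B] dominates it for large k, so [B] is an order unit.
   Otherwise some orbit avoids the shadow of B. Averaging the counting measure of that orbit over
   a Foelner sequence and passing to a cluster point in the compact cube [0,1]^(subsets of X)
   yields an invariant finitely additive probability on all subsets of X. Summing it over the
   levels of representatives gives a state normalised on [X x {0}] that vanishes on [B].
   Conversely a state with value 1 on [X x {0}] cannot vanish on an order unit. *)

lemma group_action_0: "group_action \<alpha> \<Longrightarrow> \<alpha> 0 x = x"
  by (simp add: group_action_def)

lemma group_action_add: "group_action \<alpha> \<Longrightarrow> \<alpha> (g + h) x = \<alpha> g (\<alpha> h x)"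
  by (simp add: group_action_def)

lemma group_action_continuous: "group_action \<alpha> \<Longrightarrow> continuous_on UNIV (\<alpha> g)"
  by (simp add: group_action_def)

lemma group_action_minus_left: "group_action \<alpha> \<Longrightarrow> \<alpha> (- g) (\<alpha> g x) = x"
  by (metis group_action_0 group_action_add left_minus)

lemma group_action_minus_right: "group_action \<alpha> \<Longrightarrow> \<alpha> g (\<alpha> (- g) x) = x"
  by (metis group_action_0 group_action_add right_minus)

lemma tact_Pair [simp]: "tact \<alpha> g \<sigma> (x, n) = (\<alpha> g x, \<sigma> n)"
  by (simp add: tact_def)

lemma tact_tact:
  "group_action \<alpha> \<Longrightarrow> tact \<alpha> g' \<sigma>' (tact \<alpha> g \<sigma> p) = tact \<alpha> (g' + g) (\<sigma>' \<circ> \<sigma>) p"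
  by (simp add: tact_def group_action_add)

lemma tact_inverse_left:
  "group_action \<alpha> \<Longrightarrow> bij \<sigma> \<Longrightarrow> tact \<alpha> (- g) (inv \<sigma>) (tact \<alpha> g \<sigma> p) = p"
  by (cases p) (simp add: group_action_minus_left bij_is_inj)

lemma tact_inverse_right:
  "group_action \<alpha> \<Longrightarrow> bij \<sigma> \<Longrightarrow> tact \<alpha> g \<sigma> (tact \<alpha> (- g) (inv \<sigma>) p) = p"
  by (cases p) (simp add: group_action_minus_right bij_is_surj surj_f_inv_f)

lemma continuous_on_tact:
  fixes \<alpha> :: "'g::group_add \<Rightarrow> 'x::topological_space \<Rightarrow> 'x"
  assumes "group_action \<alpha>"
  shows "continuous_on UNIV (tact \<alpha> g \<sigma>)"
proof -
  have "continuous_on UNIV (\<lambda>p::'x \<times> nat. \<alpha> g (fst p))"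
    by (rule continuous_on_compose2[OF group_action_continuous[OF assms] continuous_on_fst[OF continuous_on_id]])
      simp
  moreover have "continuous_on UNIV (\<lambda>p::'x \<times> nat. \<sigma> (snd p))"
    by (rule continuous_on_compose2[OF Topological_Spaces.continuous_on_discrete[of UNIV \<sigma>] continuous_on_snd[OF continuous_on_id]]) simp
  ultimately show ?thesis
    unfolding tact_def[abs_def] by (rule continuous_on_Pair)
qed

lemma tact_image_eq_vimage:
  assumes "group_action \<alpha>" "bij \<sigma>"
  shows "tact \<alpha> g \<sigma> ` P = tact \<alpha> (- g) (inv \<sigma>) -` P"
proof (intro set_eqI iffI)
  fix p
  assume "p \<in> tact \<alpha> g \<sigma> ` P"
  then show "p \<in> tact \<alpha> (- g) (inv \<sigma>) -` P"
    using tact_inverse_left[OF assms] by auto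
next
  fix p
  assume "p \<in> tact \<alpha> (- g) (inv \<sigma>) -` P"
  moreover have "p = tact \<alpha> g \<sigma> (tact \<alpha> (- g) (inv \<sigma>) p)"
    by (simp add: tact_inverse_right[OF assms])
  ultimately show "p \<in> tact \<alpha> g \<sigma> ` P"
    by blast
qed

lemma open_tact_image: "group_action \<alpha> \<Longrightarrow> bij \<sigma> \<Longrightarrow> open P \<Longrightarrow> open (tact \<alpha> g \<sigma> ` P)"
  by (simp add: tact_image_eq_vimage continuous_on_tact open_vimage)

lemma closed_tact_image: "group_action \<alpha> \<Longrightarrow> bij \<sigma> \<Longrightarrow> closed P \<Longrightarrow> closed (tact \<alpha> g \<sigma> ` P)"
  by (simp add: tact_image_eq_vimage continuous_on_tact closed_vimage)

lemma snd_tact_image: "snd ` tact \<alpha> g \<sigma> ` P = \<sigma> ` snd ` P"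
  by (force simp: tact_def image_iff)

lemma equidecI:
  fixes n :: nat
  assumes "\<And>i. i < n \<Longrightarrow> open (P i)" "\<And>i. i < n \<Longrightarrow> closed (P i)" "\<And>i. i < n \<Longrightarrow> bij (\<sigma>s i)"
    and "disjoint_family_on P {..<n}" "A = (\<Union>i<n. P i)"
    and "disjoint_family_on (\<lambda>i. tact \<alpha> (gs i) (\<sigma>s i) ` P i) {..<n}"
    and "B = (\<Union>i<n. tact \<alpha> (gs i) (\<sigma>s i) ` P i)"
  shows "equidec \<alpha> A B"
  unfolding equidec_def
  by (intro exI[of _ n] exI[of _ P] exI[of _ gs] exI[of _ \<sigma>s] conjI allI impI) (simp_all add: assms)

lemma equidecE:
  assumes "equidec \<alpha> A B"
  obtains n :: nat and P gs \<sigma>s where "\<And>i. i < n \<Longrightarrow> open (P i)" "\<And>i. i < n \<Longrightarrow> closed (P i)"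
    "\<And>i. i < n \<Longrightarrow> bij (\<sigma>s i)" "disjoint_family_on P {..<n}" "A = (\<Union>i<n. P i)"
    "disjoint_family_on (\<lambda>i. tact \<alpha> (gs i) (\<sigma>s i) ` P i) {..<n}"
    "B = (\<Union>i<n. tact \<alpha> (gs i) (\<sigma>s i) ` P i)"
  using assms unfolding equidec_def by blast

lemma bclopen_iff: "bclopen A \<longleftrightarrow> open A \<and> closed A \<and> finite (snd ` A)"
proof -
  have "(\<forall>n\<ge>N. \<forall>x. (x, n) \<notin> A) \<longleftrightarrow> (\<forall>n\<in>snd ` A. n < N)" for N
    by (force simp: not_less[symmetric])
  then show ?thesis
    unfolding bclopen_def finite_nat_set_iff_bounded by blast
qed

lemma bclopen_empty [simp]: "bclopen {}"
  by (simp add: bclopen_iff)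

lemma bclopen_level: "bclopen ((UNIV :: 'x::topological_space set) \<times> {n})"
  by (simp add: bclopen_iff open_Times closed_Times open_discrete)

lemma bclopen_Un: "bclopen A \<Longrightarrow> bclopen B \<Longrightarrow> bclopen (A \<union> B)"
  by (auto simp: bclopen_iff image_Un)

lemma bclopen_Diff: "bclopen A \<Longrightarrow> bclopen B \<Longrightarrow> bclopen (A - B)"
  by (auto simp: bclopen_iff intro: open_Diff closed_Diff finite_subset[of _ "snd ` A"])

lemma compact_bclopen:
  assumes "compact (UNIV :: 'x::topological_space set)" and "bclopen (A :: ('x \<times> nat) set)"
  shows "compact A"
proof -
  obtain N where "snd ` A \<subseteq> {..<N}"
    using assms(2) finite_nat_bounded by (auto simp: bclopen_iff)
  then have "A = (UNIV \<times> {..<N}) \<inter> A" by force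
  moreover have "compact ((UNIV :: 'x set) \<times> {..<N})"
    by (intro compact_Times assms(1) finite_imp_compact) simp
  ultimately show ?thesis
    using assms(2) by (metis compact_Int_closed bclopen_def)
qed

lemma equidec_bclopen:
  assumes "group_action \<alpha>" and "bclopen A" and "equidec \<alpha> A B"
  shows "bclopen B"
proof -
  obtain n :: nat and P gs \<sigma>s where P: "\<And>i. i < n \<Longrightarrow> open (P i)" "\<And>i. i < n \<Longrightarrow> closed (P i)"
      "\<And>i. i < n \<Longrightarrow> bij (\<sigma>s i)" and A: "A = (\<Union>i<n. P i)"
      and B: "B = (\<Union>i<n. tact \<alpha> (gs i) (\<sigma>s i) ` P i)"
    using assms(3) by (rule equidecE) blast
  have "finite (snd ` P i)" if "i < n" for i
  proof (rule finite_subset)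
    show "snd ` P i \<subseteq> snd ` A"
      using A that by auto
  qed (use assms(2) in \<open>simp add: bclopen_iff\<close>)
  then show ?thesis
    using P assms(1) unfolding B bclopen_iff
    by (auto simp: image_UN snd_tact_image intro!: open_UN closed_UN open_tact_image closed_tact_image)
qed

lemma compact_clopen_partition:
  fixes U :: "'i \<Rightarrow> 'a::topological_space set"
  assumes "compact A" "open A" "closed A"
    and "\<And>i. i \<in> I \<Longrightarrow> open (U i)" "\<And>i. i \<in> I \<Longrightarrow> closed (U i)" "A \<subseteq> (\<Union>i\<in>I. U i)"
  obtains n e and P :: "nat \<Rightarrow> 'a set"
  where "\<And>j. j < n \<Longrightarrow> e j \<in> I" "\<And>j. open (P j)" "\<And>j. closed (P j)"
    "\<And>j. P j \<subseteq> A \<inter> U (e j)" "disjoint_family P" "A = (\<Union>j<n. P j)"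
proof -
  obtain C where "C \<subseteq> I" "finite C" "A \<subseteq> (\<Union>i\<in>C. U i)"
    using compactE_image[OF assms(1), of I U] assms(4,6) by blast
  moreover obtain n :: nat and e :: "nat \<Rightarrow> 'i" where "C = e ` {j. j < n}"
    using finite_imp_nat_seg_image_inj_on[OF \<open>finite C\<close>] by blast
  ultimately have e: "\<And>j. j < n \<Longrightarrow> e j \<in> I" and cover: "A \<subseteq> (\<Union>j<n. U (e j))"
    by (auto simp: lessThan_def)
  define V where "V j = (if j < n then A \<inter> U (e j) else {})" for j
  have V_clopen: "open (V j) \<and> closed (V j)" for j
    using assms e by (auto simp: V_def)
  show ?thesis
  proof
    fix j
    show "open (disjointed V j)" "closed (disjointed V j)"
      unfolding disjointed_def using V_clopen by auto
    show "disjointed V j \<subseteq> A \<inter> U (e j)"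
      using disjointed_subset[of V j] by (auto simp: V_def split: if_splits)
  next
    have "(\<Union>j<n. disjointed V j) = (\<Union>j<n. V j)"
      using finite_UN_disjointed_eq[of V n] by (simp add: atLeast0LessThan)
    then show "A = (\<Union>j<n. disjointed V j)"
      using cover by (auto simp: V_def)
  qed (use e disjoint_family_disjointed in auto)
qed

section \<open>Piecewise actions\<close>

text \<open>The local form of equidecomposability: such maps compose and invert without refining
  partitions, and compactness turns them back into finite decompositions.\<close>

definition piecewise_tact ::
    "('g::group_add \<Rightarrow> 'x::topological_space \<Rightarrow> 'x) \<Rightarrow> ('x \<times> nat) set \<Rightarrow> ('x \<times> nat) set
      \<Rightarrow> ('x \<times> nat \<Rightarrow> 'x \<times> nat) \<Rightarrow> bool" where
  "piecewise_tact \<alpha> A B f \<longleftrightarrow> bij_betw f A B \<and>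
     (\<forall>p\<in>A. \<exists>g \<sigma> U. bij \<sigma> \<and> open U \<and> closed U \<and> p \<in> U \<and> (\<forall>q\<in>U \<inter> A. f q = tact \<alpha> g \<sigma> q))"

lemma piecewise_tactI:
  assumes "bij_betw f A B"
    and "\<And>p. p \<in> A \<Longrightarrow> \<exists>g \<sigma> U. bij \<sigma> \<and> open U \<and> closed U \<and> p \<in> U \<and> (\<forall>q\<in>U \<inter> A. f q = tact \<alpha> g \<sigma> q)"
  shows "piecewise_tact \<alpha> A B f"
  using assms by (simp add: piecewise_tact_def)

lemma piecewise_tactE:
  assumes "piecewise_tact \<alpha> A B f" "p \<in> A"
  obtains g \<sigma> U where "bij \<sigma>" "open U" "closed U" "p \<in> U" "\<And>q. q \<in> U \<inter> A \<Longrightarrow> f q = tact \<alpha> g \<sigma> q"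
  using assms by (auto simp: piecewise_tact_def)

lemma piecewise_tact_bij_betw: "piecewise_tact \<alpha> A B f \<Longrightarrow> bij_betw f A B"
  by (simp add: piecewise_tact_def)

lemma piecewise_tact_id: "group_action \<alpha> \<Longrightarrow> piecewise_tact \<alpha> A A id"
  unfolding piecewise_tact_def
  by (auto intro!: exI[of _ 0] exI[of _ id] exI[of _ UNIV] simp: tact_def group_action_0)

lemma piecewise_tact_inv_into:
  assumes ga: "group_action \<alpha>" and "open A" "closed A" and f: "piecewise_tact \<alpha> A B f"
  shows "piecewise_tact \<alpha> B A (inv_into A f)"
proof (rule piecewise_tactI)
  have bij: "bij_betw f A B"
    using f by (rule piecewise_tact_bij_betw)
  then show "bij_betw (inv_into A f) B A"
    by (rule bij_betw_inv_into)
  fix q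
  assume "q \<in> B"
  then obtain p where p: "p \<in> A" "q = f p"
    using bij by (auto simp: bij_betw_def)
  obtain g \<sigma> U where U: "bij \<sigma>" "open U" "closed U" "p \<in> U" "\<And>q. q \<in> U \<inter> A \<Longrightarrow> f q = tact \<alpha> g \<sigma> q"
    using f p(1) by (rule piecewise_tactE) blast
  define V where "V = tact \<alpha> g \<sigma> ` (U \<inter> A)"
  have "open V" "closed V"
    unfolding V_def using U assms by (auto intro: open_tact_image closed_tact_image)
  moreover have "q \<in> V"
    unfolding V_def using U p by auto
  moreover have "inv_into A f q' = tact \<alpha> (- g) (inv \<sigma>) q'" if q': "q' \<in> V \<inter> B" for q'
  proof -
    obtain u where u: "u \<in> U \<inter> A" "q' = tact \<alpha> g \<sigma> u"
      using q' unfolding V_def by blast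
    then have "inv_into A f q' = u"
      using U(5) bij by (metis IntD2 bij_betw_inv_into_left)
    then show ?thesis
      using u tact_inverse_left[OF ga U(1)] by simp
  qed
  ultimately show "\<exists>g \<sigma> U. bij \<sigma> \<and> open U \<and> closed U \<and> q \<in> U \<and> (\<forall>q\<in>U \<inter> B. inv_into A f q = tact \<alpha> g \<sigma> q)"
    using bij_imp_bij_inv[OF U(1)] by (intro exI[of _ "- g"] exI[of _ "inv \<sigma>"] exI[of _ V]) simp
qed

lemma piecewise_tact_comp:
  assumes ga: "group_action \<alpha>" and f: "piecewise_tact \<alpha> A B f" and h: "piecewise_tact \<alpha> B C h"
  shows "piecewise_tact \<alpha> A C (h \<circ> f)"
proof (rule piecewise_tactI)
  have bf: "bij_betw f A B" and bh: "bij_betw h B C"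
    using f h by (auto dest: piecewise_tact_bij_betw)
  then show "bij_betw (h \<circ> f) A C"
    by (rule bij_betw_trans)
  fix p
  assume p: "p \<in> A"
  obtain g \<sigma> U where U: "bij \<sigma>" "open U" "closed U" "p \<in> U" "\<And>q. q \<in> U \<inter> A \<Longrightarrow> f q = tact \<alpha> g \<sigma> q"
    using f p by (rule piecewise_tactE) blast
  have "f p \<in> B"
    using bf p by (auto simp: bij_betw_def)
  with h obtain g' \<sigma>' V where V: "bij \<sigma>'" "open V" "closed V" "f p \<in> V"
      "\<And>q. q \<in> V \<inter> B \<Longrightarrow> h q = tact \<alpha> g' \<sigma>' q"
    by (rule piecewise_tactE) blast
  define W where "W = U \<inter> tact \<alpha> g \<sigma> -` V"
  have "open W" "closed W"
    unfolding W_def using U V continuous_on_tact[OF ga]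
    by (auto intro!: open_Int closed_Int open_vimage closed_vimage)
  moreover have "p \<in> W"
    unfolding W_def using U V p by auto
  moreover have "(h \<circ> f) q = tact \<alpha> (g' + g) (\<sigma>' \<circ> \<sigma>) q" if "q \<in> W \<inter> A" for q
  proof -
    have "f q = tact \<alpha> g \<sigma> q"
      using U(5) that unfolding W_def by blast
    moreover have "f q \<in> B"
      using bij_betw_apply[OF bf] that by blast
    ultimately show ?thesis
      using V(5) that unfolding W_def by (simp add: tact_tact[OF ga])
  qed
  ultimately show "\<exists>g \<sigma> U. bij \<sigma> \<and> open U \<and> closed U \<and> p \<in> U \<and> (\<forall>q\<in>U \<inter> A. (h \<circ> f) q = tact \<alpha> g \<sigma> q)"
    using bij_comp[OF U(1) V(1)] by (intro exI[of _ "g' + g"] exI[of _ "\<sigma>' \<circ> \<sigma>"] exI[of _ W]) simp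
qed

lemma piecewise_tact_Un:
  assumes f: "piecewise_tact \<alpha> A B f" and f': "piecewise_tact \<alpha> A' B' f'"
    and "open A" "closed A" "open A'" "closed A'" "A \<inter> A' = {}" "B \<inter> B' = {}"
  shows "piecewise_tact \<alpha> (A \<union> A') (B \<union> B') (\<lambda>p. if p \<in> A then f p else f' p)"
proof (rule piecewise_tactI)
  have "bij_betw (\<lambda>p. if p \<in> A then f p else f' p) A B"
    using piecewise_tact_bij_betw[OF f] by (rule bij_betw_cong[THEN iffD1, rotated]) auto
  moreover have "bij_betw (\<lambda>p. if p \<in> A then f p else f' p) A' B'"
    using piecewise_tact_bij_betw[OF f'] by (rule bij_betw_cong[THEN iffD1, rotated]) (use assms(7) in auto)
  ultimately show "bij_betw (\<lambda>p. if p \<in> A then f p else f' p) (A \<union> A') (B \<union> B')"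
    using assms(8) by (rule bij_betw_combine)
  fix p
  assume p: "p \<in> A \<union> A'"
  show "\<exists>g \<sigma> U. bij \<sigma> \<and> open U \<and> closed U \<and> p \<in> U \<and>
          (\<forall>q\<in>U \<inter> (A \<union> A'). (if q \<in> A then f q else f' q) = tact \<alpha> g \<sigma> q)"
  proof (cases "p \<in> A")
    case True
    with f obtain g \<sigma> U where "bij \<sigma>" "open U" "closed U" "p \<in> U" "\<And>q. q \<in> U \<inter> A \<Longrightarrow> f q = tact \<alpha> g \<sigma> q"
      by (rule piecewise_tactE) blast
    then show ?thesis
      using True assms(3,4) by (intro exI[of _ g] exI[of _ \<sigma>] exI[of _ "U \<inter> A"]) auto
  next
    case False
    with p have "p \<in> A'" by simp
    with f' obtain g \<sigma> U where "bij \<sigma>" "open U" "closed U" "p \<in> U" "\<And>q. q \<in> U \<inter> A' \<Longrightarrow> f' q = tact \<alpha> g \<sigma> q"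
      by (rule piecewise_tactE) blast
    then show ?thesis
      using \<open>p \<in> A'\<close> assms(5-7) by (intro exI[of _ g] exI[of _ \<sigma>] exI[of _ "U \<inter> A'"]) auto
  qed
qed

lemma equidec_imp_piecewise_tact:
  assumes ga: "group_action \<alpha>" and "equidec \<alpha> A B"
  obtains f where "piecewise_tact \<alpha> A B f"
proof -
  obtain n :: nat and P gs \<sigma>s where P: "\<And>i. i < n \<Longrightarrow> open (P i)" "\<And>i. i < n \<Longrightarrow> closed (P i)"
      "\<And>i. i < n \<Longrightarrow> bij (\<sigma>s i)" and disj: "disjoint_family_on P {..<n}" and A: "A = (\<Union>i<n. P i)"
      and disj': "disjoint_family_on (\<lambda>i. tact \<alpha> (gs i) (\<sigma>s i) ` P i) {..<n}"
      and B: "B = (\<Union>i<n. tact \<alpha> (gs i) (\<sigma>s i) ` P i)"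
    using assms(2) by (rule equidecE) blast
  define idx where "idx p = (THE i. i < n \<and> p \<in> P i)" for p
  have idx: "idx p = i" if "i < n" "p \<in> P i" for i p
    unfolding idx_def
  proof (rule the_equality)
    fix j
    assume "j < n \<and> p \<in> P j"
    then show "j = i"
      using that disj by (auto simp: disjoint_family_on_def)
  qed (use that in simp)
  define f where "f p = tact \<alpha> (gs (idx p)) (\<sigma>s (idx p)) p" for p
  have f_on_piece: "f p = tact \<alpha> (gs i) (\<sigma>s i) p" if "i < n" "p \<in> P i" for i p
    using idx[OF that] by (simp add: f_def)
  have "bij_betw f (P i) (tact \<alpha> (gs i) (\<sigma>s i) ` P i)" if "i < n" for i
  proof -
    have "inj (tact \<alpha> (gs i) (\<sigma>s i))"
      using tact_inverse_left[OF ga P(3)[OF that]] by (metis injI)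
    then have "bij_betw (tact \<alpha> (gs i) (\<sigma>s i)) (P i) (tact \<alpha> (gs i) (\<sigma>s i) ` P i)"
      by (simp add: bij_betw_imageI inj_on_subset)
    then show ?thesis
      using bij_betw_cong[of "P i" f "tact \<alpha> (gs i) (\<sigma>s i)"] f_on_piece[OF that] by blast
  qed
  then have "bij_betw f A B"
    unfolding A B using disj' by (intro bij_betw_UNION_disjoint) auto
  moreover have "\<exists>g \<sigma> U. bij \<sigma> \<and> open U \<and> closed U \<and> p \<in> U \<and> (\<forall>q\<in>U \<inter> A. f q = tact \<alpha> g \<sigma> q)"
    if p: "p \<in> A" for p
  proof -
    obtain i where i: "i < n" "p \<in> P i"
      using p A by blast
    then show ?thesis
      using P f_on_piece[OF i(1)] A
      by (intro exI[of _ "gs i"] exI[of _ "\<sigma>s i"] exI[of _ "P i"]) auto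
  qed
  ultimately show ?thesis
    by (intro that piecewise_tactI)
qed

lemma piecewise_tact_imp_equidec:
  assumes X: "compact (UNIV :: 'x::topological_space set)"
    and A: "bclopen (A :: ('x \<times> nat) set)" and f: "piecewise_tact \<alpha> A B f"
  shows "equidec \<alpha> A B"
proof -
  have bij: "bij_betw f A B"
    using f by (rule piecewise_tact_bij_betw)
  have "\<forall>p\<in>A. \<exists>g \<sigma> U. bij \<sigma> \<and> open U \<and> closed U \<and> p \<in> U \<and> (\<forall>q\<in>U \<inter> A. f q = tact \<alpha> g \<sigma> q)"
    using f by (simp add: piecewise_tact_def)
  then obtain G S U where U: "\<And>p. p \<in> A \<Longrightarrow> bij (S p) \<and> open (U p) \<and> closed (U p) \<and> p \<in> U p
      \<and> (\<forall>q\<in>U p \<inter> A. f q = tact \<alpha> (G p) (S p) q)"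
    by metis
  have A_open: "open A" and A_closed: "closed A"
    using A by (auto simp: bclopen_def)
  have U_open: "\<And>p. p \<in> A \<Longrightarrow> open (U p)" and U_closed: "\<And>p. p \<in> A \<Longrightarrow> closed (U p)"
    and cover: "A \<subseteq> (\<Union>p\<in>A. U p)"
    using U by blast+
  obtain n :: nat and e and P :: "nat \<Rightarrow> ('x \<times> nat) set"
    where e: "\<And>j. j < n \<Longrightarrow> e j \<in> A" and P_open: "\<And>j. open (P j)" and P_closed: "\<And>j. closed (P j)"
      and P_sub: "\<And>j. P j \<subseteq> A \<inter> U (e j)" and disj: "disjoint_family P" and A_eq: "A = (\<Union>j<n. P j)"
    using compact_clopen_partition[OF compact_bclopen[OF X A] A_open A_closed U_open U_closed cover] by metis
  have f_on_piece: "f ` P j = tact \<alpha> (G (e j)) (S (e j)) ` P j" if "j < n" for j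
    using U[OF e[OF that]] P_sub[of j] by (intro image_cong) auto
  have disj_img: "disjoint_family_on (\<lambda>j. tact \<alpha> (G (e j)) (S (e j)) ` P j) {..<n}"
    unfolding disjoint_family_on_def
  proof (intro ballI impI)
    fix i j :: nat
    assume ij: "i \<in> {..<n}" "j \<in> {..<n}" "i \<noteq> j"
    have "f ` P i \<inter> f ` P j = f ` (P i \<inter> P j)"
      using bij_betw_imp_inj_on[OF bij] P_sub[of i] P_sub[of j] by (intro inj_on_image_Int[symmetric]) auto
    also have "\<dots> = {}"
      using disj ij(3) by (simp add: disjoint_family_on_def)
    finally show "tact \<alpha> (G (e i)) (S (e i)) ` P i \<inter> tact \<alpha> (G (e j)) (S (e j)) ` P j = {}"
      using f_on_piece ij(1,2) by simp
  qed
  have B_eq: "B = (\<Union>j<n. tact \<alpha> (G (e j)) (S (e j)) ` P j)"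
    using bij A_eq f_on_piece by (simp add: bij_betw_def image_UN)
  have disjP: "disjoint_family_on P {..<n}"
    using disj by (rule disjoint_family_on_mono[rotated]) simp
  show ?thesis
  proof (rule equidecI[where gs = "\<lambda>j. G (e j)" and \<sigma>s = "\<lambda>j. S (e j)"])
    fix i
    assume "i < n"
    then show "open (P i)" "closed (P i)" "bij (S (e i))"
      using P_open P_closed U e by auto
  qed (rule disjP A_eq disj_img B_eq)+
qed

section \<open>The type semigroup\<close>

lemma tcls_in_Tsg: "bclopen A \<Longrightarrow> tcls \<alpha> A \<in> Tsg \<alpha>"
  unfolding Tsg_def by blast

definition shift_levels :: "nat \<Rightarrow> ('x \<times> nat) set \<Rightarrow> ('x \<times> nat) set" where
  "shift_levels k A = (\<lambda>(x, n). (x, n + k)) ` A"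

lemma piecewise_tact_shift_levels:
  assumes "group_action \<alpha>"
  shows "piecewise_tact \<alpha> A (shift_levels k A) (\<lambda>(x, n). (x, n + k))"
proof (rule piecewise_tactI)
  show "bij_betw (\<lambda>(x, n). (x, n + k)) A (shift_levels k A)"
    unfolding shift_levels_def by (rule inj_on_imp_bij_betw) (auto simp: inj_on_def)
  fix p
  assume "p \<in> A"
  have "(\<lambda>(x, n). (x, n + k)) q = tact \<alpha> 0 (Transposition.transpose (snd p) (snd p + k)) q"
    if "q \<in> (UNIV \<times> {snd p}) \<inter> A" for q
    using that by (auto simp: group_action_0[OF assms])
  then show "\<exists>g \<sigma> U. bij \<sigma> \<and> open U \<and> closed U \<and> p \<in> U \<and>
      (\<forall>q\<in>U \<inter> A. (\<lambda>(x, n). (x, n + k)) q = tact \<alpha> g \<sigma> q)"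
    by (intro exI[of _ 0] exI[of _ "Transposition.transpose (snd p) (snd p + k)"] exI[of _ "UNIV \<times> {snd p}"])
      (auto simp: mem_Times_iff open_Times closed_Times open_discrete)
qed

lemma shift_levels_disjoint:
  assumes "snd ` B \<subseteq> {..<L}" "i \<noteq> j"
  shows "shift_levels (i * L) B \<inter> shift_levels (j * L) B = {}"
proof -
  have level: "n div L = i" if xn: "(x, n) \<in> shift_levels (i * L) B" for x n i
  proof -
    obtain m where "(x, m) \<in> B" "n = m + i * L"
      using xn unfolding shift_levels_def by auto
    moreover have "m < L"
      using assms(1) \<open>(x, m) \<in> B\<close> by force
    ultimately show ?thesis
      by simp
  qed
  show ?thesis
    using assms(2) by (auto dest: level)
qed

lemma tmul_0 [simp]: "tmul \<alpha> 0 b = tzero \<alpha>"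
  by (simp add: tmul_def)

lemma tmul_Suc [simp]: "tmul \<alpha> (Suc k) b = tadd \<alpha> b (tmul \<alpha> k b)"
  by (simp add: tmul_def)

definition stacked_copies :: "('x \<times> nat) set \<Rightarrow> nat \<Rightarrow> nat \<Rightarrow> ('x \<times> nat) set" where
  "stacked_copies B L k = (\<Union>j<k. shift_levels (j * L) B)"

lemma levels_pieces_cover:
  fixes P :: "nat \<Rightarrow> 'x set"
  assumes "UNIV = (\<Union>j<r. P j)" and "snd ` A \<subseteq> {..<M}"
  shows "A = (\<Union>i<M * r. A \<inter> (P (i mod r) \<times> {i div r}))"
proof
  show "A \<subseteq> (\<Union>i<M * r. A \<inter> (P (i mod r) \<times> {i div r}))"
  proof
    fix p
    assume "p \<in> A"
    obtain j where j: "j < r" "fst p \<in> P j"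
      using assms(1) by blast
    have "snd p < M"
      using assms(2) \<open>p \<in> A\<close> by blast
    have "snd p * r + j < Suc (snd p) * r"
      using j(1) by simp
    also have "\<dots> \<le> M * r"
      using \<open>snd p < M\<close> by (intro mult_le_mono1) simp
    finally have "snd p * r + j < M * r" .
    moreover have "(snd p * r + j) mod r = j" "(snd p * r + j) div r = snd p"
      using j(1) by simp_all
    ultimately show "p \<in> (\<Union>i<M * r. A \<inter> (P (i mod r) \<times> {i div r}))"
      using \<open>p \<in> A\<close> j(2) by (intro UN_I[of "snd p * r + j"]) (auto simp: mem_Times_iff)
  qed
qed auto

locale compact_action =
  fixes \<alpha> :: "'g::group_add \<Rightarrow> 'x::topological_space \<Rightarrow> 'x"
  assumes group_action: "group_action \<alpha>" and compact_space: "compact (UNIV :: 'x set)"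
begin

lemma equidec_iff_piecewise_tact:
  "bclopen A \<Longrightarrow> equidec \<alpha> A B \<longleftrightarrow> (\<exists>f. piecewise_tact \<alpha> A B f)"
  using equidec_imp_piecewise_tact[OF group_action] piecewise_tact_imp_equidec[OF compact_space]
  by metis

lemma equidec_refl: "bclopen A \<Longrightarrow> equidec \<alpha> A A"
  using equidec_iff_piecewise_tact piecewise_tact_id[OF group_action] by blast

lemma equidec_sym:
  assumes "bclopen A" "equidec \<alpha> A B"
  shows "equidec \<alpha> B A"
proof -
  obtain f where "piecewise_tact \<alpha> A B f"
    using assms equidec_iff_piecewise_tact by blast
  then have "piecewise_tact \<alpha> B A (inv_into A f)"
    using piecewise_tact_inv_into[OF group_action] assms(1) by (simp add: bclopen_def)
  then show ?thesis
    using equidec_iff_piecewise_tact equidec_bclopen[OF group_action assms] by blast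
qed

lemma equidec_trans:
  assumes "bclopen A" "equidec \<alpha> A B" "equidec \<alpha> B C"
  shows "equidec \<alpha> A C"
proof -
  obtain f where "piecewise_tact \<alpha> A B f"
    using assms(1,2) equidec_iff_piecewise_tact by blast
  moreover obtain h where "piecewise_tact \<alpha> B C h"
    using assms(3) equidec_iff_piecewise_tact equidec_bclopen[OF group_action assms(1,2)] by blast
  ultimately have "piecewise_tact \<alpha> A C (h \<circ> f)"
    by (rule piecewise_tact_comp[OF group_action])
  then show ?thesis
    using equidec_iff_piecewise_tact assms(1) by blast
qed

lemma equidec_Un:
  assumes "bclopen A" "bclopen A'" "A \<inter> A' = {}" "equidec \<alpha> A B" "equidec \<alpha> A' B'" "B \<inter> B' = {}"
  shows "equidec \<alpha> (A \<union> A') (B \<union> B')"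
proof -
  obtain f where "piecewise_tact \<alpha> A B f"
    using assms(1,4) equidec_iff_piecewise_tact by blast
  moreover obtain f' where "piecewise_tact \<alpha> A' B' f'"
    using assms(2,5) equidec_iff_piecewise_tact by blast
  moreover have "open A" "closed A" "open A'" "closed A'"
    using assms(1,2) by (auto simp: bclopen_def)
  ultimately have "piecewise_tact \<alpha> (A \<union> A') (B \<union> B') (\<lambda>p. if p \<in> A then f p else f' p)"
    using piecewise_tact_Un assms(3,6) by blast
  then show ?thesis
    using equidec_iff_piecewise_tact bclopen_Un[OF assms(1,2)] by blast
qed

lemma self_in_tcls: "bclopen A \<Longrightarrow> A \<in> tcls \<alpha> A"
  by (simp add: tcls_def equidec_refl)

lemma tcls_eqI:
  assumes "bclopen A" "equidec \<alpha> A A'"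
  shows "tcls \<alpha> A' = tcls \<alpha> A"
proof -
  have "bclopen A'"
    using equidec_bclopen[OF group_action assms] .
  then have "equidec \<alpha> A' B \<longleftrightarrow> equidec \<alpha> A B" for B
    using assms equidec_sym equidec_trans by blast
  then show ?thesis
    unfolding tcls_def by blast
qed

lemma tadd_tcls:
  assumes "bclopen A0" "bclopen B0" "A \<in> tcls \<alpha> A0" "B \<in> tcls \<alpha> B0" "A \<inter> B = {}"
  shows "tadd \<alpha> (tcls \<alpha> A0) (tcls \<alpha> B0) = tcls \<alpha> (A \<union> B)"
proof -
  define C where "C = (SOME C. \<exists>A B. A \<in> tcls \<alpha> A0 \<and> B \<in> tcls \<alpha> B0 \<and> A \<inter> B = {} \<and> C = A \<union> B)"
  have "\<exists>A B. A \<in> tcls \<alpha> A0 \<and> B \<in> tcls \<alpha> B0 \<and> A \<inter> B = {} \<and> C = A \<union> B"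
    unfolding C_def by (rule someI_ex) (use assms(3-5) in blast)
  then obtain A' B' where A': "A' \<in> tcls \<alpha> A0" and B': "B' \<in> tcls \<alpha> B0" and "A' \<inter> B' = {}"
    and C: "C = A' \<union> B'"
    by blast
  have "bclopen A" "bclopen B" "equidec \<alpha> A A'" "equidec \<alpha> B B'"
    using assms A' B' equidec_sym equidec_trans unfolding tcls_def by blast+
  then have "equidec \<alpha> (A \<union> B) C"
    unfolding C using equidec_Un assms(5) \<open>A' \<inter> B' = {}\<close> by blast
  then have "tcls \<alpha> C = tcls \<alpha> (A \<union> B)"
    using tcls_eqI bclopen_Un \<open>bclopen A\<close> \<open>bclopen B\<close> by blast
  then show ?thesis
    unfolding tadd_def C_def by simp
qed

lemma shift_levels_in_tcls: "bclopen A \<Longrightarrow> shift_levels k A \<in> tcls \<alpha> A"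
  using piecewise_tact_shift_levels[OF group_action] equidec_iff_piecewise_tact
    equidec_bclopen[OF group_action] unfolding tcls_def by blast

lemma bclopen_shift_levels: "bclopen (A :: ('x \<times> nat) set) \<Longrightarrow> bclopen (shift_levels k A)"
  using shift_levels_in_tcls[of A k] unfolding tcls_def by blast

lemma bclopen_stacked_copies: "bclopen (B :: ('x \<times> nat) set) \<Longrightarrow> bclopen (stacked_copies B L k)"
  by (induction k) (simp_all add: stacked_copies_def lessThan_Suc bclopen_Un bclopen_shift_levels)

lemma tmul_tcls:
  assumes B: "bclopen B" and L: "snd ` B \<subseteq> {..<L}"
  shows "tmul \<alpha> k (tcls \<alpha> B) = tcls \<alpha> (stacked_copies B L k)"
proof (induction k)
  case 0
  show ?case
    by (simp add: tzero_def stacked_copies_def)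
next
  case (Suc k)
  have "shift_levels (k * L) B \<inter> shift_levels (j * L) B = {}" if "j < k" for j
    using shift_levels_disjoint[OF L, of k j] that by simp
  then have disj: "shift_levels (k * L) B \<inter> stacked_copies B L k = {}"
    unfolding stacked_copies_def by blast
  have "tmul \<alpha> (Suc k) (tcls \<alpha> B) = tadd \<alpha> (tcls \<alpha> B) (tcls \<alpha> (stacked_copies B L k))"
    using Suc.IH by simp
  also have "\<dots> = tcls \<alpha> (shift_levels (k * L) B \<union> stacked_copies B L k)"
    using bclopen_stacked_copies[OF B]
    by (intro tadd_tcls[OF B _ shift_levels_in_tcls[OF B] self_in_tcls disj])
  also have "shift_levels (k * L) B \<union> stacked_copies B L k = stacked_copies B L (Suc k)"
    by (auto simp: stacked_copies_def lessThan_Suc)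
  finally show ?case .
qed

lemma tmul_in_Tsg: "bclopen B \<Longrightarrow> tmul \<alpha> k (tcls \<alpha> B) \<in> Tsg \<alpha>"
  using finite_nat_bounded[of "snd ` B"] tmul_tcls bclopen_stacked_copies tcls_in_Tsg
  by (metis bclopen_iff)

lemma tstate_tmul:
  assumes "tstate \<alpha> \<mu>" "bclopen B"
  shows "\<mu> (tmul \<alpha> k (tcls \<alpha> B)) = of_nat k * \<mu> (tcls \<alpha> B)"
proof (induction k)
  case 0
  then show ?case
    using assms(1) by (simp add: tstate_def)
next
  case (Suc k)
  have "tcls \<alpha> B \<in> Tsg \<alpha>" "tmul \<alpha> k (tcls \<alpha> B) \<in> Tsg \<alpha>"
    using assms(2) tcls_in_Tsg tmul_in_Tsg by blast+
  then have "\<mu> (tmul \<alpha> (Suc k) (tcls \<alpha> B)) = \<mu> (tcls \<alpha> B) + \<mu> (tmul \<alpha> k (tcls \<alpha> B))"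
    using assms(1) unfolding tstate_def by simp
  then show ?case
    using Suc.IH by (simp add: algebra_simps)
qed

lemma order_unit_state_pos:
  assumes "bclopen B" "order_unit \<alpha> (tcls \<alpha> B)" "\<mu> \<in> Mstates \<alpha>"
  shows "\<mu> (tcls \<alpha> B) > 0"
proof (rule ccontr)
  assume "\<not> \<mu> (tcls \<alpha> B) > 0"
  then have zero: "\<mu> (tcls \<alpha> B) = 0"
    by simp
  have state: "tstate \<alpha> \<mu>" and one: "\<mu> (tcls \<alpha> (UNIV \<times> {0})) = 1"
    using assms(3) by (auto simp: Mstates_def)
  have unit: "tcls \<alpha> (UNIV \<times> {0}) \<in> Tsg \<alpha>"
    by (rule tcls_in_Tsg[OF bclopen_level])
  then obtain k c where "c \<in> Tsg \<alpha>" "tmul \<alpha> k (tcls \<alpha> B) = tadd \<alpha> (tcls \<alpha> (UNIV \<times> {0})) c"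
    using assms(2) unfolding order_unit_def tle_def by blast
  then have "\<mu> (tmul \<alpha> k (tcls \<alpha> B)) = 1 + \<mu> c"
    using state unit one by (simp add: tstate_def)
  moreover have "\<mu> (tmul \<alpha> k (tcls \<alpha> B)) = 0"
    using tstate_tmul[OF state assms(1)] zero by simp
  ultimately show False
    by simp
qed

lemma orbit_cover_clopen_partition:
  assumes B: "bclopen B" and orbits: "\<And>x. \<exists>g n. (\<alpha> g x, n) \<in> B"
  obtains r :: nat and P :: "nat \<Rightarrow> 'x set" and g l
  where "\<And>j. open (P j)" "\<And>j. closed (P j)" "disjoint_family P" "UNIV = (\<Union>j<r. P j)"
    "\<And>j x. x \<in> P j \<Longrightarrow> (\<alpha> (g j) x, l j) \<in> B"
proof -
  define W where "W gn = (\<lambda>x. (\<alpha> (fst gn) x, snd gn)) -` B" for gn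
  have "continuous_on UNIV (\<lambda>x. (\<alpha> (fst gn) x, snd gn))" for gn
    using group_action_continuous[OF group_action] by (intro continuous_on_Pair continuous_on_const)
  then have W_open: "\<And>gn. gn \<in> UNIV \<Longrightarrow> open (W gn)" and W_closed: "\<And>gn. gn \<in> UNIV \<Longrightarrow> closed (W gn)"
    unfolding W_def using B by (auto simp: bclopen_def intro: open_vimage closed_vimage)
  have W_cover: "UNIV \<subseteq> (\<Union>gn\<in>UNIV. W gn)"
    using orbits unfolding W_def by fastforce
  obtain r :: nat and e and P :: "nat \<Rightarrow> 'x set"
    where "\<And>j. open (P j)" "\<And>j. closed (P j)" "\<And>j. P j \<subseteq> UNIV \<inter> W (e j)"
      "disjoint_family P" "UNIV = (\<Union>j<r. P j)"
    using compact_clopen_partition[OF compact_space open_UNIV closed_UNIV W_open W_closed W_cover] by metis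
  then show ?thesis
    using that[of P r "\<lambda>j. fst (e j)" "\<lambda>j. snd (e j)"] unfolding W_def by blast
qed

lemma equidec_into_stacked_copies:
  assumes B: "bclopen B" and L: "snd ` B \<subseteq> {..<L}" and orbits: "\<And>x. \<exists>g n. (\<alpha> g x, n) \<in> B"
    and A: "bclopen A"
  obtains k A' where "equidec \<alpha> A A'" "A' \<subseteq> stacked_copies B L k"
proof -
  obtain r :: nat and P :: "nat \<Rightarrow> 'x set" and h l where P_open: "\<And>j. open (P j)"
    and P_closed: "\<And>j. closed (P j)" and disj: "disjoint_family P" and cover: "UNIV = (\<Union>j<r. P j)"
    and into_B: "\<And>j x. x \<in> P j \<Longrightarrow> (\<alpha> (h j) x, l j) \<in> B"
    using orbit_cover_clopen_partition[OF B orbits] by metis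
  obtain M where M: "snd ` A \<subseteq> {..<M}"
    using A finite_nat_bounded by (auto simp: bclopen_iff)
  \<comment> \<open>Level \<open>m\<close> of \<open>A\<close> over the piece \<open>P j\<close> goes to the \<open>(m r + j)\<close>-th copy of \<open>B\<close>.\<close>
  define Q where "Q i = A \<inter> (P (i mod r) \<times> {i div r})" for i
  define g where "g i = h (i mod r)" for i
  define \<sigma> where "\<sigma> i = Transposition.transpose (i div r) (l (i mod r) + i * L)" for i
  have image_Q: "tact \<alpha> (g i) (\<sigma> i) ` Q i \<subseteq> shift_levels (i * L) B" for i
  proof
    fix y
    assume "y \<in> tact \<alpha> (g i) (\<sigma> i) ` Q i"
    then obtain x where x: "x \<in> P (i mod r)" "y = (\<alpha> (g i) x, l (i mod r) + i * L)"
      by (auto simp: Q_def \<sigma>_def)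
    have "(\<alpha> (g i) x, l (i mod r)) \<in> B"
      unfolding g_def using x(1) by (rule into_B)
    then show "y \<in> shift_levels (i * L) B"
      unfolding shift_levels_def x(2) by (rule rev_image_eqI) simp
  qed
  have "equidec \<alpha> A (\<Union>i<M * r. tact \<alpha> (g i) (\<sigma> i) ` Q i)"
  proof (rule equidecI)
    fix i
    show "open (Q i)" "closed (Q i)"
      unfolding Q_def using A P_open P_closed
      by (auto simp: bclopen_def open_discrete intro!: open_Int closed_Int open_Times closed_Times)
    show "bij (\<sigma> i)"
      by (simp add: \<sigma>_def)
  next
    show "disjoint_family_on Q {..<M * r}"
      unfolding disjoint_family_on_def
    proof (intro ballI impI)
      fix i j :: nat
      assume "i \<noteq> j"
      have "i mod r \<noteq> j mod r \<or> i div r \<noteq> j div r"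
        using \<open>i \<noteq> j\<close> div_mod_decomp by metis
      then show "Q i \<inter> Q j = {}"
        using disj unfolding Q_def disjoint_family_on_def by auto
    qed
  next
    show "A = (\<Union>i<M * r. Q i)"
      unfolding Q_def using cover M by (rule levels_pieces_cover)
  next
    show "disjoint_family_on (\<lambda>i. tact \<alpha> (g i) (\<sigma> i) ` Q i) {..<M * r}"
      unfolding disjoint_family_on_def using image_Q shift_levels_disjoint[OF L] by blast
  qed simp
  moreover have "(\<Union>i<M * r. tact \<alpha> (g i) (\<sigma> i) ` Q i) \<subseteq> stacked_copies B L (M * r)"
    unfolding stacked_copies_def using image_Q by blast
  ultimately show ?thesis
    by (rule that)
qed

lemma order_unit_if_orbits_meet:
  assumes B: "bclopen B" and orbits: "\<And>x. \<exists>g n. (\<alpha> g x, n) \<in> B"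
  shows "order_unit \<alpha> (tcls \<alpha> B)"
  unfolding order_unit_def
proof (intro conjI ballI)
  show "tcls \<alpha> B \<in> Tsg \<alpha>"
    using B by (rule tcls_in_Tsg)
  fix a
  assume "a \<in> Tsg \<alpha>"
  then obtain A where A: "bclopen A" "a = tcls \<alpha> A"
    unfolding Tsg_def by blast
  obtain L where L: "snd ` B \<subseteq> {..<L}"
    using B finite_nat_bounded by (auto simp: bclopen_iff)
  obtain k A' where A': "equidec \<alpha> A A'" "A' \<subseteq> stacked_copies B L k"
    using equidec_into_stacked_copies[OF B L orbits A(1)] by blast
  define C where "C = stacked_copies B L k - A'"
  have "bclopen A'" "bclopen C"
    using equidec_bclopen[OF group_action A(1) A'(1)] bclopen_stacked_copies[OF B]
    by (auto simp: C_def intro: bclopen_Diff)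
  have "tmul \<alpha> k (tcls \<alpha> B) = tcls \<alpha> (A' \<union> C)"
    using tmul_tcls[OF B L] A'(2) by (simp add: C_def Un_absorb1)
  also have "\<dots> = tadd \<alpha> a (tcls \<alpha> C)"
    unfolding A(2) using A(1) \<open>bclopen A'\<close> \<open>bclopen C\<close> A'(1)
    by (intro tadd_tcls[symmetric]) (auto simp: tcls_def C_def intro: equidec_refl)
  finally show "\<exists>k. tle \<alpha> a (tmul \<alpha> k (tcls \<alpha> B))"
    unfolding tle_def using tcls_in_Tsg[OF \<open>bclopen C\<close>] by blast
qed

end

section \<open>Invariant means from amenability\<close>

locale invariant_mean =
  fixes \<alpha> :: "'g \<Rightarrow> 'x \<Rightarrow> 'x" and \<nu> :: "'x set \<Rightarrow> real"
  assumes mean_nonneg: "\<nu> C \<ge> 0"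
    and mean_Un: "C \<inter> D = {} \<Longrightarrow> \<nu> (C \<union> D) = \<nu> C + \<nu> D"
    and mean_invariant: "\<nu> (\<alpha> g ` C) = \<nu> C"
    and mean_UNIV: "\<nu> UNIV = 1"
begin

lemma mean_empty: "\<nu> {} = 0"
  using mean_Un[of "{}" "{}"] by simp

lemma mean_mono: "C \<subseteq> D \<Longrightarrow> \<nu> C \<le> \<nu> D"
  using mean_Un[of C "D - C"] mean_nonneg[of "D - C"] by (simp add: Un_absorb1)

end

lemma compact_unit_cube: "compact {f :: 'a \<Rightarrow> real. \<forall>x. f x \<in> {0..1}}"
proof -
  have "compactin (product_topology (\<lambda>_. euclidean) UNIV) (PiE UNIV (\<lambda>_::'a. {0..1::real}))"
    by (subst compactin_PiE) auto
  moreover have "PiE UNIV (\<lambda>_::'a. {0..1::real}) = {f. \<forall>x. f x \<in> {0..1}}"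
    by (auto simp: PiE_UNIV_domain)
  ultimately show ?thesis
    by (simp add: euclidean_product_topology)
qed

lemma cluster_point_tendsto_eq:
  fixes \<phi> :: "'a::topological_space \<Rightarrow> 'b::t2_space"
  assumes "continuous_on UNIV \<phi>" and "inf (nhds \<nu>) (filtermap s F) \<noteq> bot"
    and "((\<lambda>n. \<phi> (s n)) \<longlongrightarrow> l) F"
  shows "\<phi> \<nu> = l"
proof (rule ccontr)
  assume "\<phi> \<nu> \<noteq> l"
  then obtain U V where UV: "open U" "open V" "\<phi> \<nu> \<in> U" "l \<in> V" "U \<inter> V = {}"
    using hausdorff[OF \<open>\<phi> \<nu> \<noteq> l\<close>] by blast
  have "eventually (\<lambda>f. \<phi> f \<in> U) (nhds \<nu>)"
    using eventually_nhds_in_open[OF open_vimage[OF UV(1) assms(1)], of \<nu>] UV(3) by simp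
  then have "eventually (\<lambda>f. \<phi> f \<in> U) (inf (nhds \<nu>) (filtermap s F))"
    by (rule filter_leD[OF inf_le1])
  moreover have "eventually (\<lambda>f. \<phi> f \<in> V) (filtermap s F)"
    using topological_tendstoD[OF assms(3) UV(2,4)] by (simp add: eventually_filtermap)
  then have "eventually (\<lambda>f. \<phi> f \<in> V) (inf (nhds \<nu>) (filtermap s F))"
    by (rule filter_leD[OF inf_le2])
  ultimately have "eventually (\<lambda>f. \<phi> f \<in> U \<and> \<phi> f \<in> V) (inf (nhds \<nu>) (filtermap s F))"
    by (rule eventually_conj)
  then have "eventually (\<lambda>f. False) (inf (nhds \<nu>) (filtermap s F))"
    by (rule eventually_mono) (use UV(5) in blast)
  then show False
    using assms(2) by (simp add: eventually_False)
qed

lemma amenable_group_Folner_sequence: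
  assumes "amenable_group TYPE('g)"
  obtains K :: "nat \<Rightarrow> 'g::{group_add, countable} set" where "\<And>n. finite (K n)" "\<And>n. K n \<noteq> {}"
    "\<And>g. (\<lambda>n. real (card (sym_diff ((+) g ` K n) (K n))) / real (card (K n))) \<longlonglongrightarrow> 0"
proof -
  have "\<exists>K :: 'g set. finite K \<and> K \<noteq> {} \<and> (\<forall>g\<in>from_nat ` {..n}.
      real (card (sym_diff ((+) g ` K) K)) < 1 / real (Suc n) * real (card K))" for n
  proof -
    have "finite (from_nat ` {..n} :: 'g set)"
      by simp
    then show ?thesis
      using assms[unfolded amenable_group_def, rule_format, of "from_nat ` {..n}" "1 / real (Suc n)"]
      by simp
  qed
  then obtain K :: "nat \<Rightarrow> 'g set" where K: "\<And>n. finite (K n)" "\<And>n. K n \<noteq> {}"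
    "\<And>n g. g \<in> from_nat ` {..n} \<Longrightarrow>
      real (card (sym_diff ((+) g ` K n) (K n))) < 1 / real (Suc n) * real (card (K n))"
    by metis
  show ?thesis
  proof (rule that[OF K(1,2)])
    fix g :: 'g
    have "eventually (\<lambda>n. real (card (sym_diff ((+) g ` K n) (K n))) / real (card (K n))
        \<le> inverse (real (Suc n))) sequentially"
      unfolding eventually_sequentially
    proof (intro exI allI impI)
      fix n
      assume "to_nat g \<le> n"
      then have "g \<in> from_nat ` {..n}"
        by (metis atMost_iff from_nat_to_nat image_eqI)
      moreover have "real (card (K n)) > 0"
        using K(1,2) by (simp add: card_gt_0_iff)
      ultimately show "real (card (sym_diff ((+) g ` K n) (K n))) / real (card (K n))
          \<le> inverse (real (Suc n))"
        using K(3)[of g n] by (simp add: divide_simps)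
    qed
    then show "(\<lambda>n. real (card (sym_diff ((+) g ` K n) (K n))) / real (card (K n))) \<longlonglongrightarrow> 0"
      by (intro tendsto_sandwich[OF _ _ tendsto_const LIMSEQ_inverse_real_of_nat]) auto
  qed
qed

lemma abs_card_Int_diff_le:
  assumes "finite K" "finite K'"
  shows "\<bar>real (card (E \<inter> K')) - real (card (E \<inter> K))\<bar> \<le> real (card (sym_diff K' K))"
proof -
  have "card (E \<inter> K') \<le> card ((E \<inter> K) \<union> (K' - K))" "card (E \<inter> K) \<le> card ((E \<inter> K') \<union> (K - K'))"
    using assms by (auto intro: card_mono)
  moreover have "card (K' - K) \<le> card ((K' - K) \<union> (K - K'))" "card (K - K') \<le> card ((K' - K) \<union> (K - K'))"
    using assms by (auto intro: card_mono)
  ultimately show ?thesis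
    using card_Un_le[of "E \<inter> K" "K' - K"] card_Un_le[of "E \<inter> K'" "K - K'"] by linarith
qed

lemma abs_card_translate_Int_diff_le:
  fixes g :: "'g::group_add"
  assumes "finite K"
  shows "\<bar>real (card ((+) g ` E \<inter> K)) - real (card (E \<inter> K))\<bar> \<le> real (card (sym_diff ((+) (- g) ` K) K))"
proof -
  have "(+) g ` (+) (- g) ` K = K"
    by (simp add: image_image)
  then have "(+) g ` E \<inter> K = (+) g ` (E \<inter> (+) (- g) ` K)"
    by (simp add: image_Int inj_def)
  then have "card ((+) g ` E \<inter> K) = card (E \<inter> (+) (- g) ` K)"
    by (simp add: card_image inj_on_def)
  then show ?thesis
    using abs_card_Int_diff_le[of K "(+) (- g) ` K" E] assms by simp
qed

lemma amenable_group_invariant_mean: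
  assumes "amenable_group TYPE('g)"
  obtains m :: "'g::{group_add, countable} set \<Rightarrow> real" where "invariant_mean (+) m"
proof -
  obtain K :: "nat \<Rightarrow> 'g set" where K_fin: "\<And>n. finite (K n)" and K_ne: "\<And>n. K n \<noteq> {}"
    and Folner: "\<And>g. (\<lambda>n. real (card (sym_diff ((+) g ` K n) (K n))) / real (card (K n))) \<longlonglongrightarrow> 0"
    using amenable_group_Folner_sequence[OF assms] by blast
  have K_pos: "real (card (K n)) > 0" for n
    using K_fin K_ne by (simp add: card_gt_0_iff)
  define s where "s n E = real (card (E \<inter> K n)) / real (card (K n))" for n E
  have s_01: "s n \<in> {f. \<forall>E. f E \<in> {0..1}}" for n
    using K_pos K_fin by (auto simp: s_def divide_le_eq_1 intro: card_mono)
  obtain m where m_01: "\<And>E. m E \<in> {0..1}" and cluster: "inf (nhds m) (filtermap s sequentially) \<noteq> bot"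
    using compact_unit_cube[unfolded compact_filter, rule_format, of "filtermap s sequentially"] s_01
    by (auto simp: filtermap_bot_iff eventually_filtermap)
  \<comment> \<open>Every linear identity that holds for all \<open>s n\<close>, exactly or in the limit, passes to \<open>m\<close>.\<close>
  note limit = cluster_point_tendsto_eq[OF _ cluster]
  show ?thesis
  proof (intro that invariant_mean.intro)
    show "m E \<ge> 0" for E
      using m_01[of E] by simp
    have "s n UNIV = 1" for n
      using K_pos[of n] by (simp add: s_def)
    then show "m UNIV = 1"
      using limit[of "\<lambda>f. f UNIV" 1] by simp
  next
    fix C D :: "'g set"
    assume "C \<inter> D = {}"
    then have "card ((C \<union> D) \<inter> K n) = card (C \<inter> K n) + card (D \<inter> K n)" for n
      using K_fin[of n] by (subst Int_Un_distrib2, intro card_Un_disjoint) auto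
    then have "s n (C \<union> D) - s n C - s n D = 0" for n
      by (simp add: s_def add_divide_distrib)
    then show "m (C \<union> D) = m C + m D"
      using limit[of "\<lambda>f. f (C \<union> D) - f C - f D" 0] by (simp add: continuous_on_diff)
  next
    fix g :: 'g and E :: "'g set"
    have "\<bar>s n ((+) g ` E) - s n E\<bar> \<le> real (card (sym_diff ((+) (- g) ` K n) (K n))) / real (card (K n))" for n
    proof -
      have "s n ((+) g ` E) - s n E
          = (real (card ((+) g ` E \<inter> K n)) - real (card (E \<inter> K n))) / real (card (K n))"
        by (simp add: s_def diff_divide_distrib)
      then have "\<bar>s n ((+) g ` E) - s n E\<bar>
          = \<bar>real (card ((+) g ` E \<inter> K n)) - real (card (E \<inter> K n))\<bar> / real (card (K n))"
        using K_pos[of n] by (simp only: abs_divide abs_of_pos)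
      also have "\<dots> \<le> real (card (sym_diff ((+) (- g) ` K n) (K n))) / real (card (K n))"
        using abs_card_translate_Int_diff_le[OF K_fin] by (rule divide_right_mono) simp
      finally show ?thesis .
    qed
    then have "(\<lambda>n. s n ((+) g ` E) - s n E) \<longlonglongrightarrow> 0"
      by (intro Lim_null_comparison[OF _ Folner[of "- g"]]) auto
    then show "m ((+) g ` E) = m E"
      using limit[of "\<lambda>f. f ((+) g ` E) - f E" 0] by (simp add: continuous_on_diff)
  qed
qed

lemma invariant_mean_orbit:
  assumes "group_action \<alpha>" and "invariant_mean (+) m"
  shows "invariant_mean \<alpha> (\<lambda>C. m {k. \<alpha> k z \<in> C})"
proof -
  interpret m: invariant_mean "(+)" m
    by (fact assms(2))
  have "{k. \<alpha> k z \<in> \<alpha> g ` C} = (+) g ` {k. \<alpha> k z \<in> C}" for g C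
  proof (intro set_eqI iffI)
    fix k
    assume "k \<in> {k. \<alpha> k z \<in> \<alpha> g ` C}"
    then have "- g + k \<in> {k. \<alpha> k z \<in> C}"
      using assms(1) by (auto simp: group_action_add group_action_minus_left)
    then show "k \<in> (+) g ` {k. \<alpha> k z \<in> C}"
      by (rule rev_image_eqI) (simp add: add.assoc[symmetric])
  next
    fix k
    assume "k \<in> (+) g ` {k. \<alpha> k z \<in> C}"
    then show "k \<in> {k. \<alpha> k z \<in> \<alpha> g ` C}"
      using assms(1) by (auto simp: group_action_add)
  qed
  moreover have "m {k. \<alpha> k z \<in> C \<union> D} = m {k. \<alpha> k z \<in> C} + m {k. \<alpha> k z \<in> D}"
    if "C \<inter> D = {}" for C D
  proof -
    have "{k. \<alpha> k z \<in> C \<union> D} = {k. \<alpha> k z \<in> C} \<union> {k. \<alpha> k z \<in> D}"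
      by auto
    then show ?thesis
      using that by (simp add: m.mean_Un disjoint_iff)
  qed
  ultimately show ?thesis
    by unfold_locales (simp_all add: m.mean_nonneg m.mean_invariant m.mean_UNIV)
qed

section \<open>States induced by invariant means\<close>

definition level :: "nat \<Rightarrow> ('x \<times> nat) set \<Rightarrow> 'x set" where
  "level n A = {x. (x, n) \<in> A}"

definition level_sum :: "('x set \<Rightarrow> real) \<Rightarrow> ('x \<times> nat) set \<Rightarrow> real" where
  "level_sum \<nu> A = (\<Sum>n\<in>snd ` A. \<nu> (level n A))"

context invariant_mean
begin

lemma level_sum_eq:
  assumes "finite I" "snd ` A \<subseteq> I"
  shows "level_sum \<nu> A = (\<Sum>n\<in>I. \<nu> (level n A))"
  unfolding level_sum_def
proof (rule sum.mono_neutral_left[OF assms], intro ballI)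
  fix n
  assume "n \<in> I - snd ` A"
  then have "(x, n) \<notin> A" for x
    by (metis DiffD2 image_eqI snd_conv)
  then show "\<nu> (level n A) = 0"
    by (simp add: level_def mean_empty)
qed

lemma level_sum_nonneg: "level_sum \<nu> A \<ge> 0"
  unfolding level_sum_def by (intro sum_nonneg mean_nonneg)

lemma level_sum_Un:
  assumes "finite (snd ` A)" "finite (snd ` B)" "A \<inter> B = {}"
  shows "level_sum \<nu> (A \<union> B) = level_sum \<nu> A + level_sum \<nu> B"
proof -
  let ?I = "snd ` A \<union> snd ` B"
  have "level n (A \<union> B) = level n A \<union> level n B" "level n A \<inter> level n B = {}" for n
    using assms(3) by (auto simp: level_def)
  then have "(\<Sum>n\<in>?I. \<nu> (level n (A \<union> B))) = (\<Sum>n\<in>?I. \<nu> (level n A)) + (\<Sum>n\<in>?I. \<nu> (level n B))"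
    by (simp add: mean_Un sum.distrib)
  then show ?thesis
    using assms(1,2) by (simp add: level_sum_eq[of ?I] image_Un)
qed

lemma level_sum_UN:
  fixes n :: nat
  assumes "\<And>i. i < n \<Longrightarrow> finite (snd ` P i)" and "disjoint_family_on P {..<n}"
  shows "level_sum \<nu> (\<Union>i<n. P i) = (\<Sum>i<n. level_sum \<nu> (P i))"
  using assms
proof (induction n)
  case 0
  then show ?case
    by (simp add: level_sum_def)
next
  case (Suc n)
  have "P i \<inter> P n = {}" if "i < n" for i
    using Suc.prems(2) that unfolding disjoint_family_on_def by simp
  then have disj: "(\<Union>i<n. P i) \<inter> P n = {}"
    by blast
  have IH: "level_sum \<nu> (\<Union>i<n. P i) = (\<Sum>i<n. level_sum \<nu> (P i))"
    using Suc.prems by (intro Suc.IH) (auto simp: disjoint_family_on_def)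
  have "(\<Union>i<Suc n. P i) = (\<Union>i<n. P i) \<union> P n"
    by (auto simp: lessThan_Suc)
  moreover have "level_sum \<nu> ((\<Union>i<n. P i) \<union> P n) = level_sum \<nu> (\<Union>i<n. P i) + level_sum \<nu> (P n)"
    using Suc.prems(1) disj by (intro level_sum_Un) (auto simp: image_UN)
  ultimately show ?case
    using IH by simp
qed

lemma level_sum_tact:
  assumes "bij \<sigma>"
  shows "level_sum \<nu> (tact \<alpha> g \<sigma> ` P) = level_sum \<nu> P"
proof -
  have "level (\<sigma> n) (tact \<alpha> g \<sigma> ` P) = \<alpha> g ` level n P" for n
    using bij_is_inj[OF assms] by (auto simp: level_def tact_def image_iff inj_eq) force
  then have "level_sum \<nu> (tact \<alpha> g \<sigma> ` P) = (\<Sum>n\<in>snd ` P. \<nu> (\<alpha> g ` level n P))"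
    unfolding level_sum_def snd_tact_image
    using inj_on_subset[OF bij_is_inj[OF assms] subset_UNIV] by (simp add: sum.reindex)
  then show ?thesis
    by (simp add: level_sum_def mean_invariant)
qed

end

locale compact_action_mean = compact_action \<alpha> + invariant_mean \<alpha> \<nu>
  for \<alpha> :: "'g::group_add \<Rightarrow> 'x::topological_space \<Rightarrow> 'x" and \<nu>
begin

lemma level_sum_equidec:
  assumes "bclopen A" and "equidec \<alpha> A B"
  shows "level_sum \<nu> B = level_sum \<nu> A"
proof -
  obtain n :: nat and P gs \<sigma>s where bij: "\<And>i. i < n \<Longrightarrow> bij (\<sigma>s i)"
      and disj: "disjoint_family_on P {..<n}" and A: "A = (\<Union>i<n. P i)"
      and disj': "disjoint_family_on (\<lambda>i. tact \<alpha> (gs i) (\<sigma>s i) ` P i) {..<n}"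
      and B: "B = (\<Union>i<n. tact \<alpha> (gs i) (\<sigma>s i) ` P i)"
    using assms(2) by (rule equidecE) blast
  have fin: "finite (snd ` P i)" if "i < n" for i
  proof (rule finite_subset)
    show "snd ` P i \<subseteq> snd ` A"
      using A that by auto
  qed (use assms(1) in \<open>simp add: bclopen_iff\<close>)
  have "level_sum \<nu> B = (\<Sum>i<n. level_sum \<nu> (tact \<alpha> (gs i) (\<sigma>s i) ` P i))"
    unfolding B using fin disj' by (intro level_sum_UN) (auto simp: snd_tact_image)
  also have "\<dots> = (\<Sum>i<n. level_sum \<nu> (P i))"
    using bij level_sum_tact by simp
  also have "\<dots> = level_sum \<nu> A"
    unfolding A using fin disj by (intro level_sum_UN[symmetric])
  finally show ?thesis .
qed

definition induced_state :: "('x \<times> nat) set set \<Rightarrow> ennreal" where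
  "induced_state c = ennreal (level_sum \<nu> (SOME A. A \<in> c))"

lemma induced_state_tcls:
  assumes "bclopen A"
  shows "induced_state (tcls \<alpha> A) = ennreal (level_sum \<nu> A)"
proof -
  have "(SOME B. B \<in> tcls \<alpha> A) \<in> tcls \<alpha> A"
    using self_in_tcls[OF assms] by (rule someI)
  then show ?thesis
    unfolding induced_state_def tcls_def using level_sum_equidec[OF assms] by simp
qed

lemma induced_state_in_Mstates: "induced_state \<in> Mstates \<alpha>"
  unfolding Mstates_def tstate_def
proof (intro CollectI conjI ballI)
  show "induced_state (tzero \<alpha>) = 0"
    by (simp add: tzero_def induced_state_tcls level_sum_def)
  show "induced_state (tcls \<alpha> (UNIV \<times> {0})) = 1"
    by (simp add: induced_state_tcls[OF bclopen_level] level_sum_def level_def mean_UNIV)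
  fix a b
  assume "a \<in> Tsg \<alpha>" "b \<in> Tsg \<alpha>"
  then obtain A B where A: "bclopen A" "a = tcls \<alpha> A" and B: "bclopen B" "b = tcls \<alpha> B"
    unfolding Tsg_def by blast
  obtain N where N: "snd ` A \<subseteq> {..<N}"
    using A(1) finite_nat_bounded by (auto simp: bclopen_iff)
  have disj: "A \<inter> shift_levels N B = {}"
    using N by (force simp: shift_levels_def)
  have "tadd \<alpha> a b = tcls \<alpha> (A \<union> shift_levels N B)"
    unfolding A(2) B(2) using A(1) B(1) disj by (intro tadd_tcls self_in_tcls shift_levels_in_tcls)
  moreover have S: "bclopen (shift_levels N B)"
    using B(1) by (rule bclopen_shift_levels)
  ultimately have "induced_state (tadd \<alpha> a b) = ennreal (level_sum \<nu> (A \<union> shift_levels N B))"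
    using induced_state_tcls[OF bclopen_Un[OF A(1) S]] by simp
  also have "level_sum \<nu> (A \<union> shift_levels N B) = level_sum \<nu> A + level_sum \<nu> (shift_levels N B)"
    using A(1) S disj by (intro level_sum_Un) (simp_all add: bclopen_iff)
  also have "level_sum \<nu> (shift_levels N B) = level_sum \<nu> B"
    using level_sum_equidec[OF B(1)] shift_levels_in_tcls[OF B(1)] by (simp add: tcls_def)
  finally show "induced_state (tadd \<alpha> a b) = induced_state a + induced_state b"
    using A B by (simp add: induced_state_tcls level_sum_nonneg ennreal_plus)
qed

lemma induced_state_eq_0:
  assumes "bclopen B" and "\<nu> (fst ` B) = 0"
  shows "induced_state (tcls \<alpha> B) = 0"
proof -
  have "\<nu> (level n B) = 0" for n
    using mean_mono[of "level n B" "fst ` B"] mean_nonneg[of "level n B"] assms(2)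
    by (force simp: level_def)
  then show ?thesis
    by (simp add: induced_state_tcls[OF assms(1)] level_sum_def)
qed

end

lemma state_vanishing_if_orbit_avoids:
  fixes \<alpha> :: "'g::{group_add, countable} \<Rightarrow> 'x::topological_space \<Rightarrow> 'x"
  assumes "amenable_group TYPE('g)" and action: "compact_action \<alpha>" and B: "bclopen B"
    and avoid: "\<And>g n. (\<alpha> g z, n) \<notin> B"
  obtains \<mu> where "\<mu> \<in> Mstates \<alpha>" "\<mu> (tcls \<alpha> B) = 0"
proof -
  obtain m :: "'g set \<Rightarrow> real" where m: "invariant_mean (+) m"
    using amenable_group_invariant_mean[OF assms(1)] .
  interpret compact_action_mean \<alpha> "\<lambda>C. m {k. \<alpha> k z \<in> C}"
    using action invariant_mean_orbit[OF compact_action.group_action[OF action] m]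
    by (rule compact_action_mean.intro)
  have "{k. \<alpha> k z \<in> fst ` B} = {}"
    using avoid by force
  then have "induced_state (tcls \<alpha> B) = 0"
    using induced_state_eq_0[OF B] invariant_mean.mean_empty[OF m] by simp
  then show ?thesis
    using induced_state_in_Mstates that by blast
qed

theorem lemmal:
  fixes \<alpha> :: "'g::{group_add, countable} \<Rightarrow> 'x::t2_space \<Rightarrow> 'x"
    and b :: "('x \<times> nat) set set"
  assumes "amenable_group TYPE('g)"
    and "group_action \<alpha>"
    and "compact (UNIV :: 'x set)"
    and "zero_dimensional TYPE('x)"
    and "b \<in> Tsg \<alpha>"
  shows "order_unit \<alpha> b \<longleftrightarrow> (\<forall>\<mu>\<in>Mstates \<alpha>. \<mu> b > 0)"
proof -
  have action: "compact_action \<alpha>"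
    using assms(2,3) by unfold_locales
  then interpret compact_action \<alpha> .
  obtain B where B: "bclopen B" "b = tcls \<alpha> B"
    using assms(5) unfolding Tsg_def by blast
  show ?thesis
  proof
    assume "order_unit \<alpha> b"
    then show "\<forall>\<mu>\<in>Mstates \<alpha>. \<mu> b > 0"
      using order_unit_state_pos B by blast
  next
    assume pos: "\<forall>\<mu>\<in>Mstates \<alpha>. \<mu> b > 0"
    show "order_unit \<alpha> b"
    proof (rule ccontr)
      assume "\<not> order_unit \<alpha> b"
      then obtain z where "\<And>g n. (\<alpha> g z, n) \<notin> B"
        using order_unit_if_orbits_meet B by blast
      then obtain \<mu> where "\<mu> \<in> Mstates \<alpha>" "\<mu> b = 0"
        using state_vanishing_if_orbit_avoids[OF assms(1) action B(1)] B(2) by metis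
      then show False
        using pos by fastforce
    qed
  qed
qed

end
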